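(* Let $\mathcal{G} = (\mathcal{V}, \mathcal{E})$ be a graph and $(i,j) \in \mathcal{V} \times \mathcal{V}$ a pair of nodes of $\mathcal{G}$. Then there exist a graph $\mathcal{G}' = (\mathcal{V}', \mathcal{E}')$ not isomorphic to $\mathcal{G}$ and a pair of nodes $(i',j') \in \mathcal{V}' \times \mathcal{V}'$ such that $(P_k)_{ij} = (P'_k)_{i'j'}$ for all integers $k \geq 1$, where $P_k$ and $P'_k$ are the $k$-hop random walk matrices of $\mathcal{G}$ and $\mathcal{G}'$ respectively.
   Context: Graphs are finite and undirected, and every node has positive degree so that the random walk matrix is defined. For a graph with adjacency matrix $A$ (with $A_{ij}=1$ if $i,j$ are adjacent and $0$ otherwise) and diagonal degree matrix $D$ (with $D_{ii} = \sum_j A_{ij}$), the $k$-hop random walk matrix is $P_k = (D^{-1}A)^k$; its $(i,j)$ entry is the probability that a simple random walk of length $k$ started at $i$ ends at $j$. The graphs $\mathcal{G}$ and $\mathcal{G}'$ need not have the same number of nodes. *)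

theory Defs
  imports Complex_Main
begin

definition graph :: "'a set \<Rightarrow> ('a \<Rightarrow> 'a \<Rightarrow> bool) \<Rightarrow> bool" where
  "graph V E \<longleftrightarrow> finite V
     \<and> (\<forall>x y. E x y \<longrightarrow> x \<in> V \<and> y \<in> V)
     \<and> (\<forall>x y. E x y \<longrightarrow> E y x)
     \<and> (\<forall>x. \<not> E x x)
     \<and> (\<forall>x\<in>V. \<exists>y\<in>V. E x y)"

definition adj :: "('a \<Rightarrow> 'a \<Rightarrow> bool) \<Rightarrow> 'a \<Rightarrow> 'a \<Rightarrow> real" where
  "adj E x y = (if E x y then 1 else 0)"

definition degree :: "'a set \<Rightarrow> ('a \<Rightarrow> 'a \<Rightarrow> bool) \<Rightarrow> 'a \<Rightarrow> real" where
  "degree V E x = (\<Sum>y\<in>V. adj E x y)"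

text \<open>Entry (i,j) of the k-hop random walk matrix P_k = (D^{-1} A)^k.\<close>
fun rw_matrix :: "'a set \<Rightarrow> ('a \<Rightarrow> 'a \<Rightarrow> bool) \<Rightarrow> nat \<Rightarrow> 'a \<Rightarrow> 'a \<Rightarrow> real" where
  "rw_matrix V E 0 i j = (if i = j then 1 else 0)"
| "rw_matrix V E (Suc k) i j =
     (\<Sum>l\<in>V. (adj E i l / degree V E i) * rw_matrix V E k l j)"

definition graph_iso :: "'a set \<Rightarrow> ('a \<Rightarrow> 'a \<Rightarrow> bool) \<Rightarrow> 'b set \<Rightarrow> ('b \<Rightarrow> 'b \<Rightarrow> bool) \<Rightarrow> bool" where
  "graph_iso V E V' E' \<longleftrightarrow>
     (\<exists>f. bij_betw f V V' \<and> (\<forall>x\<in>V. \<forall>y\<in>V. E x y \<longleftrightarrow> E' (f x) (f y)))"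

end

theory Submission
  imports Defs
begin

text \<open>Transport the graph to vertices 0, ..., n - 1 of type nat and add a disjoint
  component consisting of a single edge between two new vertices n and n + 1.
  The new graph has two more vertices, so it is not isomorphic to the old one, while a
  random walk started in the old part never leaves it, so all its transition
  probabilities between old vertices are unchanged.\<close>

definition image_edges :: "('a \<Rightarrow> 'b) \<Rightarrow> 'a set \<Rightarrow> ('a \<Rightarrow> 'a \<Rightarrow> bool) \<Rightarrow> 'b \<Rightarrow> 'b \<Rightarrow> bool" where
  "image_edges g V E x y \<longleftrightarrow> (\<exists>a\<in>V. \<exists>b\<in>V. x = g a \<and> y = g b \<and> E a b)"

definition add_edge :: "('a \<Rightarrow> 'a \<Rightarrow> bool) \<Rightarrow> 'a \<Rightarrow> 'a \<Rightarrow> 'a \<Rightarrow> 'a \<Rightarrow> bool" where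
  "add_edge E a b x y \<longleftrightarrow> E x y \<or> (x = a \<and> y = b) \<or> (x = b \<and> y = a)"

lemma image_edges_iff:
  assumes "inj_on g V" "a \<in> V" "b \<in> V"
  shows "image_edges g V E (g a) (g b) \<longleftrightarrow> E a b"
  using assms by (auto simp: image_edges_def inj_on_def)

lemma graph_image_edges:
  assumes "graph V E" "inj_on g V"
  shows "graph (g ` V) (image_edges g V E)"
  using assms unfolding graph_def image_edges_def inj_on_def by blast

lemma graph_add_edge:
  assumes "graph V E" "a \<notin> V" "b \<notin> V" "a \<noteq> b"
  shows "graph (insert a (insert b V)) (add_edge E a b)"
  using assms unfolding graph_def add_edge_def by blast

lemma graph_iso_card: "graph_iso V E V' E' \<Longrightarrow> card V = card V'"
  unfolding graph_iso_def by (auto intro: bij_betw_same_card)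

text \<open>The walk matrix only sees the neighbourhood of the current vertex, so it is
  preserved by any injective map onto a union of connected components.\<close>
lemma rw_matrix_embedding:
  assumes "finite V'" "g ` V \<subseteq> V'" "inj_on g V"
    and edges: "\<And>x y. x \<in> V \<Longrightarrow> y \<in> V \<Longrightarrow> E' (g x) (g y) \<longleftrightarrow> E x y"
    and closed: "\<And>x y. x \<in> V \<Longrightarrow> y \<in> V' - g ` V \<Longrightarrow> \<not> E' (g x) y"
    and "l \<in> V" "j \<in> V"
  shows "rw_matrix V' E' k (g l) (g j) = rw_matrix V E k l j"
  using \<open>l \<in> V\<close>
proof (induction k arbitrary: l)
  case 0
  then show ?case using \<open>inj_on g V\<close> \<open>j \<in> V\<close> by (auto simp: inj_on_def)
next
  case (Suc k)
  have sum_V': "(\<Sum>y\<in>V'. f y) = (\<Sum>x\<in>V. f (g x))"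
    if "\<And>y. y \<in> V' - g ` V \<Longrightarrow> f y = 0" for f :: "_ \<Rightarrow> real"
  proof -
    have "(\<Sum>y\<in>V'. f y) = (\<Sum>y\<in>g ` V. f y)"
      using assms(1,2) that by (intro sum.mono_neutral_right) auto
    also have "\<dots> = (\<Sum>x\<in>V. f (g x))"
      using \<open>inj_on g V\<close> by (simp add: sum.reindex)
    finally show ?thesis .
  qed
  have degree: "degree V' E' (g l) = degree V E l"
    unfolding degree_def by (subst sum_V') (auto simp: adj_def closed edges Suc.prems)
  show ?case
    by (simp add: degree, subst sum_V') (auto simp: adj_def closed edges Suc.prems Suc.IH)
qed

theorem proposition2:
  fixes V :: "'a set" and E :: "'a \<Rightarrow> 'a \<Rightarrow> bool" and i j :: 'a
  assumes "graph V E" and "i \<in> V" and "j \<in> V"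
  shows "\<exists>(V' :: nat set) E' i' j'. graph V' E' \<and> \<not> graph_iso V E V' E'
           \<and> i' \<in> V' \<and> j' \<in> V'
           \<and> (\<forall>k::nat. k \<ge> 1 \<longrightarrow> rw_matrix V E k i j = rw_matrix V' E' k i' j')"
proof -
  obtain g :: "'a \<Rightarrow> nat" and n where g: "inj_on g V" "g ` V = {i. i < n}"
    using assms(1) finite_imp_inj_to_nat_seg unfolding graph_def by metis
  have g_less: "g x < n" if "x \<in> V" for x
    using g(2) that by auto
  define V' where "V' = insert n (insert (Suc n) (g ` V))"
  define E' where "E' = add_edge (image_edges g V E) n (Suc n)"
  have "graph V' E'"
    unfolding V'_def E'_def using g
    by (intro graph_add_edge graph_image_edges assms(1)) auto
  moreover have "\<not> graph_iso V E V' E'"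
  proof
    assume "graph_iso V E V' E'"
    then have "card V = card V'" by (rule graph_iso_card)
    then show False using g card_image[OF g(1)] by (simp add: V'_def)
  qed
  moreover have "rw_matrix V' E' k (g i) (g j) = rw_matrix V E k i j" for k
  proof (rule rw_matrix_embedding)
    show "finite V'" "g ` V \<subseteq> V'"
      using assms(1) by (auto simp: V'_def graph_def)
    show "E' (g x) (g y) \<longleftrightarrow> E x y" if "x \<in> V" "y \<in> V" for x y
      using g_less that image_edges_iff[OF g(1) that] by (auto simp: E'_def add_edge_def)
    show "\<not> E' (g x) y" if "x \<in> V" "y \<in> V' - g ` V" for x y
      using that g_less[OF that(1)] by (auto simp: E'_def add_edge_def image_edges_def V'_def)
  qed (use g assms in auto)
  moreover have "g i \<in> V'" "g j \<in> V'"
    using assms(2,3) by (auto simp: V'_def)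
  ultimately show ?thesis
    by metis
qed

end
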